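(* Let $\mathcal K$ be an abstract Krivine structure. Define on $\mathcal P(\Pi)$ the relation $P\sqsubseteq Q$ iff there is $t\in\mathrm{QP}$ with $t\perp\pi$ for every $\pi\in\{s\cdot\rho: s\in{}^\perp P,\ \rho\in Q\}$, and let $\sqsubseteq_\bullet$ be its restriction to $\mathcal P_\bullet(\Pi)$. Then the inclusion $(\mathcal P_\bullet(\Pi),\sqsubseteq_\bullet)\hookrightarrow(\mathcal P(\Pi),\sqsubseteq)$ is an equivalence of preorders.
   Context: An abstract Krivine structure $\mathcal K$ consists of sets $\Lambda,\Pi$, a relation $\perp\subseteq\Lambda\times\Pi$, a map $\mathrm{push}$ written $t\cdot\pi$ (associating to the right), an application $ts$ on $\Lambda$, a subset $\mathrm{QP}\subseteq\Lambda$ closed under application, and $\mathsf K,\mathsf S\in\mathrm{QP}$ with: $t\perp s\cdot\pi\Rightarrow ts\perp\pi$; $t\perp\pi\Rightarrow\mathsf K\perp t\cdot s\cdot\pi$; $tu(su)\perp\pi\Rightarrow\mathsf S\perp t\cdot s\cdot u\cdot\pi$. Polars: $L^\perp=\{\pi:\forall t\in L,\ t\perp\pi\}$, ${}^\perp P=\{t:\forall\pi\in P,\ t\perp\pi\}$; $\overline P=({}^\perp P)^\perp$; $\widehat P=\bigcup_{\pi\in P}\overline{\{\pi\}}$; $\mathcal P_\bullet(\Pi)=\{P:\widehat P=P\}$. A monotone map $f$ between preorders is an equivalence if there is a monotone $g$ in the other direction with $g\circ f$ and $f\circ g$ each pointwise isomorphic (mutually $\le$) to the identity. *)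

theory Defs
  imports Main
begin

text \<open>Abstract Krivine structure with carriers Lam (terms) and Pi (stacks),
  orthogonality relation perp, push operation, application app,
  the set QP of quasi-proofs and the combinators K and S.\<close>

definition aks ::
  "'l set \<Rightarrow> 'p set \<Rightarrow> ('l \<Rightarrow> 'p \<Rightarrow> bool) \<Rightarrow> ('l \<Rightarrow> 'p \<Rightarrow> 'p) \<Rightarrow>
   ('l \<Rightarrow> 'l \<Rightarrow> 'l) \<Rightarrow> 'l set \<Rightarrow> 'l \<Rightarrow> 'l \<Rightarrow> bool" where
  "aks Lam Pi perp push app QP K S \<longleftrightarrow>
     (\<forall>t \<pi>. perp t \<pi> \<longrightarrow> t \<in> Lam \<and> \<pi> \<in> Pi) \<and>
     (\<forall>t\<in>Lam. \<forall>\<pi>\<in>Pi. push t \<pi> \<in> Pi) \<and>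
     (\<forall>t\<in>Lam. \<forall>s\<in>Lam. app t s \<in> Lam) \<and>
     QP \<subseteq> Lam \<and>
     (\<forall>t\<in>QP. \<forall>s\<in>QP. app t s \<in> QP) \<and>
     K \<in> QP \<and> S \<in> QP \<and>
     (\<forall>t\<in>Lam. \<forall>s\<in>Lam. \<forall>\<pi>\<in>Pi. perp t (push s \<pi>) \<longrightarrow> perp (app t s) \<pi>) \<and>
     (\<forall>t\<in>Lam. \<forall>s\<in>Lam. \<forall>\<pi>\<in>Pi. perp t \<pi> \<longrightarrow> perp K (push t (push s \<pi>))) \<and>
     (\<forall>t\<in>Lam. \<forall>s\<in>Lam. \<forall>u\<in>Lam. \<forall>\<pi>\<in>Pi.
        perp (app (app t u) (app s u)) \<pi> \<longrightarrow> perp S (push t (push s (push u \<pi>))))"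

definition polarL :: "'p set \<Rightarrow> ('l \<Rightarrow> 'p \<Rightarrow> bool) \<Rightarrow> 'l set \<Rightarrow> 'p set" where
  "polarL Pi perp L = {\<pi> \<in> Pi. \<forall>t\<in>L. perp t \<pi>}"

definition polarP :: "'l set \<Rightarrow> ('l \<Rightarrow> 'p \<Rightarrow> bool) \<Rightarrow> 'p set \<Rightarrow> 'l set" where
  "polarP Lam perp P = {t \<in> Lam. \<forall>\<pi>\<in>P. perp t \<pi>}"

definition bicl :: "'l set \<Rightarrow> 'p set \<Rightarrow> ('l \<Rightarrow> 'p \<Rightarrow> bool) \<Rightarrow> 'p set \<Rightarrow> 'p set" where
  "bicl Lam Pi perp P = polarL Pi perp (polarP Lam perp P)"

definition hatcl :: "'l set \<Rightarrow> 'p set \<Rightarrow> ('l \<Rightarrow> 'p \<Rightarrow> bool) \<Rightarrow> 'p set \<Rightarrow> 'p set" where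
  "hatcl Lam Pi perp P = (\<Union>\<pi>\<in>P. bicl Lam Pi perp {\<pi>})"

definition Pbullet :: "'l set \<Rightarrow> 'p set \<Rightarrow> ('l \<Rightarrow> 'p \<Rightarrow> bool) \<Rightarrow> 'p set set" where
  "Pbullet Lam Pi perp = {P. P \<subseteq> Pi \<and> hatcl Lam Pi perp P = P}"

definition sqle ::
  "'l set \<Rightarrow> ('l \<Rightarrow> 'p \<Rightarrow> bool) \<Rightarrow> ('l \<Rightarrow> 'p \<Rightarrow> 'p) \<Rightarrow> 'l set \<Rightarrow> 'p set \<Rightarrow> 'p set \<Rightarrow> bool" where
  "sqle Lam perp push QP P Q \<longleftrightarrow>
     (\<exists>t\<in>QP. \<forall>\<pi> \<in> {push s \<rho> | s \<rho>. s \<in> polarP Lam perp P \<and> \<rho> \<in> Q}. perp t \<pi>)"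

definition preorder_equivalence ::
  "'a set \<Rightarrow> ('a \<Rightarrow> 'a \<Rightarrow> bool) \<Rightarrow> 'b set \<Rightarrow> ('b \<Rightarrow> 'b \<Rightarrow> bool) \<Rightarrow> ('a \<Rightarrow> 'b) \<Rightarrow> bool" where
  "preorder_equivalence A leA B leB f \<longleftrightarrow>
     f ` A \<subseteq> B \<and>
     (\<forall>x\<in>A. \<forall>y\<in>A. leA x y \<longrightarrow> leB (f x) (f y)) \<and>
     (\<exists>g. g ` B \<subseteq> A \<and>
          (\<forall>x\<in>B. \<forall>y\<in>B. leB x y \<longrightarrow> leA (g x) (g y)) \<and>
          (\<forall>x\<in>A. leA (g (f x)) x \<and> leA x (g (f x))) \<and>
          (\<forall>y\<in>B. leB (f (g y)) y \<and> leB y (f (g y))))"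

end

theory Submission
  imports Defs
begin

text \<open>A set of stacks and its closure \<open>\<widehat>P\<close> have the same orthogonal set of terms,
  so the identity combinator \<open>SKK\<close> realizes both \<open>P \<sqsubseteq> \<widehat>P\<close> and \<open>\<widehat>P \<sqsubseteq> P\<close>.
  The closure is idempotent, hence lands in \<open>P\<^sub>\<bullet>(\<Pi>)\<close>, and it is monotone because
  \<open>\<sqsubseteq>\<close> is transitive (realizers \<open>t\<close> of \<open>P \<sqsubseteq> Q\<close> and \<open>u\<close> of \<open>Q \<sqsubseteq> R\<close> compose to
  \<open>S (K u) t\<close>). So the closure is an inverse of the inclusion up to isomorphism.\<close>

lemma polarL_antimono: "L \<subseteq> L' \<Longrightarrow> polarL Pi perp L' \<subseteq> polarL Pi perp L"
  unfolding polarL_def by blast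

lemma mem_bicl_singleton: "\<pi> \<in> Pi \<Longrightarrow> \<pi> \<in> bicl Lam Pi perp {\<pi>}"
  unfolding bicl_def polarL_def polarP_def by blast

lemma perp_if_mem_bicl:
  "t \<in> polarP Lam perp X \<Longrightarrow> \<rho> \<in> bicl Lam Pi perp X \<Longrightarrow> perp t \<rho>"
  unfolding bicl_def polarL_def by blast

lemma bicl_singleton_subset:
  assumes "\<pi> \<in> bicl Lam Pi perp {\<sigma>}"
  shows "bicl Lam Pi perp {\<pi>} \<subseteq> bicl Lam Pi perp {\<sigma>}"
proof -
  have "polarP Lam perp {\<sigma>} \<subseteq> polarP Lam perp {\<pi>}"
    using perp_if_mem_bicl[OF _ assms] unfolding polarP_def by blast
  then show ?thesis
    unfolding bicl_def by (rule polarL_antimono)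
qed

lemma subset_hatcl: "P \<subseteq> Pi \<Longrightarrow> P \<subseteq> hatcl Lam Pi perp P"
  unfolding hatcl_def using mem_bicl_singleton[of _ Pi Lam perp] by blast

lemma hatcl_subset: "hatcl Lam Pi perp P \<subseteq> Pi"
  unfolding hatcl_def bicl_def polarL_def by blast

lemma hatcl_idem: "hatcl Lam Pi perp (hatcl Lam Pi perp P) = hatcl Lam Pi perp P"
proof
  show "hatcl Lam Pi perp (hatcl Lam Pi perp P) \<subseteq> hatcl Lam Pi perp P"
  proof
    fix \<rho> assume "\<rho> \<in> hatcl Lam Pi perp (hatcl Lam Pi perp P)"
    then obtain \<pi> \<sigma> where "\<sigma> \<in> P" "\<pi> \<in> bicl Lam Pi perp {\<sigma>}" "\<rho> \<in> bicl Lam Pi perp {\<pi>}"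
      unfolding hatcl_def by blast
    then show "\<rho> \<in> hatcl Lam Pi perp P"
      using bicl_singleton_subset[of \<pi> Lam Pi perp \<sigma>] unfolding hatcl_def by blast
  qed
qed (rule subset_hatcl[OF hatcl_subset])

lemma hatcl_in_Pbullet: "hatcl Lam Pi perp P \<in> Pbullet Lam Pi perp"
  unfolding Pbullet_def using hatcl_subset[of Lam Pi perp P] hatcl_idem[of Lam Pi perp P] by blast

lemma polarP_hatcl:
  assumes "P \<subseteq> Pi"
  shows "polarP Lam perp (hatcl Lam Pi perp P) = polarP Lam perp P"
proof
  show "polarP Lam perp (hatcl Lam Pi perp P) \<subseteq> polarP Lam perp P"
    using subset_hatcl[OF assms, of Lam perp] unfolding polarP_def by blast
  show "polarP Lam perp P \<subseteq> polarP Lam perp (hatcl Lam Pi perp P)"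
  proof
    fix t assume t: "t \<in> polarP Lam perp P"
    have "perp t \<rho>" if "\<pi> \<in> P" "\<rho> \<in> bicl Lam Pi perp {\<pi>}" for \<pi> \<rho>
    proof (rule perp_if_mem_bicl[OF _ that(2)])
      show "t \<in> polarP Lam perp {\<pi>}"
        using t that(1) unfolding polarP_def by blast
    qed
    then show "t \<in> polarP Lam perp (hatcl Lam Pi perp P)"
      using t unfolding polarP_def hatcl_def by blast
  qed
qed

locale krivine_structure =
  fixes Lam :: "'l set" and Pi :: "'p set" and perp :: "'l \<Rightarrow> 'p \<Rightarrow> bool"
    and push :: "'l \<Rightarrow> 'p \<Rightarrow> 'p" and app :: "'l \<Rightarrow> 'l \<Rightarrow> 'l"
    and QP :: "'l set" and K :: 'l and S :: 'l
  assumes aks: "aks Lam Pi perp push app QP K S"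
begin

lemma push_closed: "t \<in> Lam \<Longrightarrow> \<pi> \<in> Pi \<Longrightarrow> push t \<pi> \<in> Pi"
  and app_closed: "t \<in> Lam \<Longrightarrow> s \<in> Lam \<Longrightarrow> app t s \<in> Lam"
  and QP_subset: "QP \<subseteq> Lam"
  and app_QP: "t \<in> QP \<Longrightarrow> s \<in> QP \<Longrightarrow> app t s \<in> QP"
  and K_QP: "K \<in> QP"
  and S_QP: "S \<in> QP"
  and perp_push_app:
    "t \<in> Lam \<Longrightarrow> s \<in> Lam \<Longrightarrow> \<pi> \<in> Pi \<Longrightarrow> perp t (push s \<pi>) \<Longrightarrow> perp (app t s) \<pi>"
  and perp_K:
    "t \<in> Lam \<Longrightarrow> s \<in> Lam \<Longrightarrow> \<pi> \<in> Pi \<Longrightarrow> perp t \<pi> \<Longrightarrow> perp K (push t (push s \<pi>))"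
  and perp_S:
    "t \<in> Lam \<Longrightarrow> s \<in> Lam \<Longrightarrow> u \<in> Lam \<Longrightarrow> \<pi> \<in> Pi \<Longrightarrow>
      perp (app (app t u) (app s u)) \<pi> \<Longrightarrow> perp S (push t (push s (push u \<pi>)))"
  using aks unfolding aks_def by blast+

lemma K_Lam: "K \<in> Lam" and S_Lam: "S \<in> Lam"
  using K_QP S_QP QP_subset by blast+

lemma SKK_QP: "app (app S K) K \<in> QP"
  by (intro app_QP K_QP S_QP)

lemma SKK_perp_push:
  assumes s: "s \<in> Lam" and \<pi>: "\<pi> \<in> Pi" and "perp s \<pi>"
  shows "perp (app (app S K) K) (push s \<pi>)"
proof -
  have Ks: "app K s \<in> Lam" using app_closed[OF K_Lam s] .
  have "perp K (push s (push (app K s) \<pi>))"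
    using perp_K[OF s Ks \<pi> \<open>perp s \<pi>\<close>] .
  then have "perp (app K s) (push (app K s) \<pi>)"
    by (rule perp_push_app[OF K_Lam s push_closed[OF Ks \<pi>]])
  then have "perp (app (app K s) (app K s)) \<pi>"
    by (rule perp_push_app[OF Ks Ks \<pi>])
  then have "perp S (push K (push K (push s \<pi>)))"
    by (rule perp_S[OF K_Lam K_Lam s \<pi>])
  then have "perp (app S K) (push K (push s \<pi>))"
    by (rule perp_push_app[OF S_Lam K_Lam push_closed[OF K_Lam push_closed[OF s \<pi>]]])
  then show ?thesis
    by (rule perp_push_app[OF app_closed[OF S_Lam K_Lam] K_Lam push_closed[OF s \<pi>]])
qed

lemma sqle_if_polarP_subset:
  assumes "Q \<subseteq> Pi" and "polarP Lam perp P \<subseteq> polarP Lam perp Q"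
  shows "sqle Lam perp push QP P Q"
  unfolding sqle_def
proof (intro bexI[OF _ SKK_QP] ballI, clarify)
  fix s \<rho> assume "s \<in> polarP Lam perp P" and "\<rho> \<in> Q"
  then have "s \<in> Lam" "\<rho> \<in> Pi" "perp s \<rho>"
    using assms unfolding polarP_def by blast+
  then show "perp (app (app S K) K) (push s \<rho>)"
    by (rule SKK_perp_push)
qed

lemma sqle_hatcl:
  assumes "P \<subseteq> Pi"
  shows "sqle Lam perp push QP P (hatcl Lam Pi perp P)"
    and "sqle Lam perp push QP (hatcl Lam Pi perp P) P"
proof -
  have polar_eq: "polarP Lam perp (hatcl Lam Pi perp P) = polarP Lam perp P"
    using polarP_hatcl[OF assms] .
  show "sqle Lam perp push QP P (hatcl Lam Pi perp P)"
    by (rule sqle_if_polarP_subset[OF hatcl_subset]) (simp add: polar_eq)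
  show "sqle Lam perp push QP (hatcl Lam Pi perp P) P"
    by (rule sqle_if_polarP_subset[OF assms]) (simp add: polar_eq)
qed

text \<open>Against the stack \<open>s\<cdot>\<pi>\<close> with \<open>s \<in> \<^sup>\<perp>P\<close>, the term \<open>S (K u) t\<close> reduces to
  \<open>(K u s)(t s)\<close> and then to \<open>u\<close> against \<open>(t s)\<cdot>\<pi>\<close>, where \<open>t s \<in> \<^sup>\<perp>Q\<close>.\<close>

lemma sqle_trans:
  assumes Q: "Q \<subseteq> Pi" and R: "R \<subseteq> Pi"
    and PQ: "sqle Lam perp push QP P Q" and QR: "sqle Lam perp push QP Q R"
  shows "sqle Lam perp push QP P R"
proof -
  obtain t where t: "t \<in> QP"
    and ht: "\<And>s \<rho>. s \<in> polarP Lam perp P \<Longrightarrow> \<rho> \<in> Q \<Longrightarrow> perp t (push s \<rho>)"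
    using PQ unfolding sqle_def by blast
  obtain u where u: "u \<in> QP"
    and hu: "\<And>s \<rho>. s \<in> polarP Lam perp Q \<Longrightarrow> \<rho> \<in> R \<Longrightarrow> perp u (push s \<rho>)"
    using QR unfolding sqle_def by blast
  have tL: "t \<in> Lam" and uL: "u \<in> Lam" and Ku: "app K u \<in> Lam"
    using t u QP_subset app_closed[OF K_Lam] by blast+
  show ?thesis
    unfolding sqle_def
  proof (intro bexI[of _ "app (app S (app K u)) t"] ballI, clarify)
    fix s \<pi> assume s: "s \<in> polarP Lam perp P" and "\<pi> \<in> R"
    have sL: "s \<in> Lam" using s unfolding polarP_def by blast
    have \<pi>: "\<pi> \<in> Pi" using \<open>\<pi> \<in> R\<close> R by blast
    have ts: "app t s \<in> Lam" using app_closed[OF tL sL] .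
    have "perp (app t s) \<rho>" if "\<rho> \<in> Q" for \<rho>
      using that Q ht[OF s] perp_push_app[OF tL sL] by blast
    then have "app t s \<in> polarP Lam perp Q"
      unfolding polarP_def using ts by blast
    then have "perp u (push (app t s) \<pi>)"
      using hu \<open>\<pi> \<in> R\<close> by blast
    then have "perp K (push u (push s (push (app t s) \<pi>)))"
      by (rule perp_K[OF uL sL push_closed[OF ts \<pi>]])
    then have "perp (app K u) (push s (push (app t s) \<pi>))"
      by (rule perp_push_app[OF K_Lam uL push_closed[OF sL push_closed[OF ts \<pi>]]])
    then have "perp (app (app K u) s) (push (app t s) \<pi>)"
      by (rule perp_push_app[OF Ku sL push_closed[OF ts \<pi>]])
    then have "perp (app (app (app K u) s) (app t s)) \<pi>"
      by (rule perp_push_app[OF app_closed[OF Ku sL] ts \<pi>])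
    then have "perp S (push (app K u) (push t (push s \<pi>)))"
      by (rule perp_S[OF Ku tL sL \<pi>])
    then have "perp (app S (app K u)) (push t (push s \<pi>))"
      by (rule perp_push_app[OF S_Lam Ku push_closed[OF tL push_closed[OF sL \<pi>]]])
    then show "perp (app (app S (app K u)) t) (push s \<pi>)"
      by (rule perp_push_app[OF app_closed[OF S_Lam Ku] tL push_closed[OF sL \<pi>]])
  qed (intro app_QP S_QP K_QP t u)
qed

lemma sqle_hatcl_mono:
  assumes "P \<subseteq> Pi" and "Q \<subseteq> Pi" and "sqle Lam perp push QP P Q"
  shows "sqle Lam perp push QP (hatcl Lam Pi perp P) (hatcl Lam Pi perp Q)"
proof -
  have "sqle Lam perp push QP P (hatcl Lam Pi perp Q)"
    using sqle_trans[OF assms(2) hatcl_subset[of Lam Pi perp Q] assms(3) sqle_hatcl(1)[OF assms(2)]] .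
  then show ?thesis
    by (rule sqle_trans[OF assms(1) hatcl_subset sqle_hatcl(2)[OF assms(1)]])
qed

end

theorem mainTheorem9:
  assumes "aks Lam Pi perp push app QP K S"
  shows "preorder_equivalence (Pbullet Lam Pi perp) (sqle Lam perp push QP)
           (Pow Pi) (sqle Lam perp push QP) (\<lambda>P. P)"
proof -
  interpret krivine_structure Lam Pi perp push app QP K S
    using assms by (rule krivine_structure.intro)
  have Pbullet_Pow: "Pbullet Lam Pi perp \<subseteq> Pow Pi"
    unfolding Pbullet_def by blast
  show ?thesis
    unfolding preorder_equivalence_def
  proof (intro conjI ballI impI exI[of _ "hatcl Lam Pi perp"])
    show "(\<lambda>P. P) ` Pbullet Lam Pi perp \<subseteq> Pow Pi"
      using Pbullet_Pow by simp
    show "hatcl Lam Pi perp ` Pow Pi \<subseteq> Pbullet Lam Pi perp"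
      using hatcl_in_Pbullet[of Lam Pi perp] by blast
    show "sqle Lam perp push QP (hatcl Lam Pi perp P) (hatcl Lam Pi perp Q)"
      if "P \<in> Pow Pi" "Q \<in> Pow Pi" "sqle Lam perp push QP P Q" for P Q
      using that by (intro sqle_hatcl_mono) blast+
    show "sqle Lam perp push QP (hatcl Lam Pi perp P) P"
      and "sqle Lam perp push QP P (hatcl Lam Pi perp P)" if "P \<in> Pow Pi" for P
      using that sqle_hatcl[of P] by blast+
    show "sqle Lam perp push QP (hatcl Lam Pi perp P) P"
      and "sqle Lam perp push QP P (hatcl Lam Pi perp P)" if "P \<in> Pbullet Lam Pi perp" for P
      using that Pbullet_Pow sqle_hatcl[of P] by blast+
  qed
qed

end
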